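(* For positive integers $d$ and $h$, let $\mathrm{spec}(d,h)$ be the set of complex numbers $\lambda$ such that $\lambda$ is an eigenvalue of some $d\times d$ matrix all of whose entries are integers in $[-h,h]$. If $n$ is a power of $2$, then $$|\mathrm{spec}(2n+1,h)|\ \ge\ \frac{2n}{5^{2n}}\, h^{n^2}.$$
   Context: $h$ is a positive integer. An integer matrix of height $h$ means an integer matrix whose entries lie in $[-h,h]$. *)

theory Defs
  imports Complex_Main "Jordan_Normal_Form.Char_Poly"
begin

definition int_mats_height :: "nat \<Rightarrow> nat \<Rightarrow> int mat set" where
  "int_mats_height d h = {A \<in> carrier_mat d d. \<forall>i<d. \<forall>j<d. \<bar>A $$ (i, j)\<bar> \<le> int h}"

definition spec :: "nat \<Rightarrow> nat \<Rightarrow> complex set" where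
  "spec d h = {z. \<exists>A \<in> int_mats_height d h. eigenvalue (map_mat of_int A) z}"

end

theory Submission
  imports Defs
begin

(* For digits B i j (1 \<le> i, j \<le> n) and integers s, w there is a sparse (2n+1) \<times> (2n+1) matrix
   with entries among 0, 1, s, w and the B i j that has every nonzero root of
     z^(2n+1) = w * (\<Sum>i j. B i j * s^(i-1) * z^(2n-i-j))
   as an eigenvalue. Grouping the cells along the antidiagonals i + j = K turns the right-hand side
   into w * (\<Sum>K. T K * z^(2n-K)), where T K may be any integer whose base-s digits sit at the
   positions i - 1 of that antidiagonal; there are about s^(n^2) such vectors T. Choosing them so
   that the resulting polynomial (or its quotient by x) is Eisenstein at one fixed prime makes the
   polynomials irreducible and pairwise distinct, so they have pairwise disjoint sets of roots and
   each contributes its own eigenvalue. For h \<ge> 3 take s = h and w a prime factor of h - 1; for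
   h = 2 take s = 2, w = 1 and the prime 3. *)

definition eisenstein_at :: "int \<Rightarrow> int poly \<Rightarrow> bool" where
  "eisenstein_at q P \<longleftrightarrow>
     \<not> q dvd lead_coeff P \<and> (\<forall>i<degree P. q dvd coeff P i) \<and> \<not> q\<^sup>2 dvd coeff P 0"

lemma prime_dvd_coeff_of_factor:
  fixes A B :: "int poly"
  assumes "prime q" and dvd_coeffs: "\<forall>i<degree (A * B). q dvd coeff (A * B) i"
    and "\<not> q dvd coeff B 0" and "degree A < degree (A * B)"
  shows "q dvd coeff A i"
proof (induction i rule: less_induct)
  case (less i)
  show ?case
  proof (cases "i \<le> degree A")
    case False
    then show ?thesis by (simp add: coeff_eq_0)
  next
    case True
    have "coeff (A * B) i = (\<Sum>j<i. coeff A j * coeff B (i - j)) + coeff A i * coeff B 0"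
      by (simp add: coeff_mult lessThan_Suc_atMost[symmetric])
    moreover have "q dvd (\<Sum>j<i. coeff A j * coeff B (i - j))"
      using less.IH by (intro dvd_sum) auto
    moreover have "q dvd coeff (A * B) i"
      using dvd_coeffs True assms(4) by simp
    ultimately have "q dvd coeff A i * coeff B 0"
      by (metis dvd_add_right_iff)
    with assms(1,3) show ?thesis
      using prime_dvd_mult_iff by blast
  qed
qed

lemma degree_pos_of_primitive_factor:
  fixes A B :: "int poly"
  assumes "content (A * B) = 1" and "\<not> is_unit A"
  shows "degree A > 0"
proof (rule ccontr)
  assume "\<not> degree A > 0"
  then obtain a where A: "A = [:a:]"
    by (metis degree_eq_zeroE gr0I)
  have "content A * content B = 1"
    using assms(1) by (simp add: content_mult)
  then have "is_unit a"
    by (metis A content_const dvd_triv_left normalize_dvd_iff)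
  with assms(2) A show False
    by (simp add: is_unit_poly_iff)
qed

lemma eisenstein_irreducible:
  fixes P :: "int poly"
  assumes "prime q" and eis: "eisenstein_at q P" and "content P = 1" and "degree P > 0"
  shows "irreducible P"
proof (rule irreducibleI)
  show "P \<noteq> 0" "\<not> is_unit P"
    using \<open>degree P > 0\<close> by (auto simp: is_unit_poly_iff)
  have lead: "q dvd lead_coeff P"
    if "P = A * B" "\<not> q dvd coeff B 0" "degree A > 0" "degree B > 0" for A B
  proof -
    have "A \<noteq> 0" "B \<noteq> 0"
      using that(3,4) by auto
    then have "degree A < degree (A * B)"
      using that(4) by (simp add: degree_mult_eq)
    moreover have "\<forall>i<degree (A * B). q dvd coeff (A * B) i"
      using eis that(1) by (simp add: eisenstein_at_def)
    ultimately have "q dvd coeff A (degree A)"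
      using prime_dvd_coeff_of_factor[OF \<open>prime q\<close>] that(2) by blast
    then show ?thesis
      using that(1) by (simp add: lead_coeff_mult)
  qed
  fix A B
  assume P: "P = A * B"
  show "is_unit A \<or> is_unit B"
  proof (rule ccontr)
    assume "\<not> (is_unit A \<or> is_unit B)"
    then have "degree A > 0" "degree B > 0"
      using degree_pos_of_primitive_factor \<open>content P = 1\<close> P mult.commute by metis+
    have coeff0: "coeff P 0 = coeff A 0 * coeff B 0"
      using P by (simp add: coeff_mult)
    have "q dvd coeff P 0"
      using eis \<open>degree P > 0\<close> by (simp add: eisenstein_at_def)
    moreover have "\<not> (q dvd coeff A 0 \<and> q dvd coeff B 0)"
      using eis coeff0 by (auto simp: eisenstein_at_def power2_eq_square mult_dvd_mono)
    ultimately have "\<not> q dvd coeff B 0 \<or> \<not> q dvd coeff A 0"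
      by blast
    then have "q dvd lead_coeff P"
      using lead P \<open>degree A > 0\<close> \<open>degree B > 0\<close> by (metis mult.commute)
    with eis show False
      by (simp add: eisenstein_at_def)
  qed
qed

lemma of_int_poly_root_imp_degree_pos:
  fixes R :: "int poly" and z :: "'a :: {idom, ring_char_0}"
  assumes "R \<noteq> 0" and "poly (of_int_poly R) z = 0"
  shows "degree R > 0"
proof (rule ccontr)
  assume "\<not> degree R > 0"
  then obtain c where "R = [:c:]"
    by (metis degree_eq_zeroE gr0I)
  with assms show False
    by simp
qed

lemma prime_poly_dvd_factor_of_smult:
  fixes P R S :: "int poly"
  assumes "prime_elem P" and "a \<noteq> 0" and "R \<noteq> 0" and RS: "R * S = P * [:a:]"
  shows "P dvd R \<or> degree R = 0"
proof -
  have "P dvd R * S"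
    using RS by (metis dvd_triv_left)
  then consider "P dvd R" | "P dvd S"
    using assms(1) prime_elem_dvd_mult_iff by blast
  then show ?thesis
  proof cases
    case 2
    then obtain U where "S = P * U" ..
    with RS have "P * (R * U) = P * [:a:]"
      by (simp add: mult.left_commute)
    moreover have "P \<noteq> 0"
      using assms(1) by auto
    ultimately have "[:a:] = R * U"
      by (metis mult_left_cancel)
    moreover from this have "U \<noteq> 0"
      using \<open>a \<noteq> 0\<close> by auto
    ultimately have "degree R = 0"
      using assms(3) by (metis degree_mult_eq degree_pCons_0 add_is_0)
    then show ?thesis
      by simp
  qed simp
qed

lemma prime_poly_degree_le_of_common_root:
  fixes P R :: "int poly" and z :: "'a :: {idom, ring_char_0}"
  assumes "prime_elem P" and "R \<noteq> 0"
    and "poly (of_int_poly P) z = 0" and "poly (of_int_poly R) z = 0"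
  shows "degree P \<le> degree R"
  using assms(2,4)
proof (induction "degree R" arbitrary: R rule: less_induct)
  case less
  define r where "r = pseudo_mod P R"
  obtain a S where "a \<noteq> 0" and division: "Polynomial.smult a P = R * S + r"
    using pseudo_mod(1)[OF less.prems(1)] unfolding r_def by blast
  have "poly (of_int_poly (Polynomial.smult a P)) z = poly (of_int_poly (R * S + r)) z"
    by (simp only: division)
  then have root_r: "poly (of_int_poly r) z = 0"
    using assms(3) less.prems(2) by (simp add: hom_distribs)
  show ?case
  proof (cases "r = 0")
    case False
    then have "degree r < degree R"
      using pseudo_mod(2)[OF less.prems(1)] unfolding r_def by blast
    with less.hyps[OF this False root_r] show ?thesis
      by simp
  next
    case True
    with division have "R * S = P * [:a:]"
      by simp
    with assms(1) \<open>a \<noteq> 0\<close> less.prems(1) have "P dvd R \<or> degree R = 0"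
      by (rule prime_poly_dvd_factor_of_smult)
    then show ?thesis
    proof
      assume "P dvd R"
      then show ?thesis
        using less.prems(1) by (rule dvd_imp_degree_le)
    next
      assume "degree R = 0"
      with of_int_poly_root_imp_degree_pos[OF less.prems] show ?thesis
        by simp
    qed
  qed
qed

lemma prime_poly_eq_of_common_root:
  fixes P Q :: "int poly" and z :: "'a :: {idom, ring_char_0}"
  assumes "prime_elem P" and "degree Q = degree P" and "lead_coeff Q = lead_coeff P"
    and "poly (of_int_poly P) z = 0" and "poly (of_int_poly Q) z = 0"
  shows "Q = P"
proof (rule ccontr)
  assume "Q \<noteq> P"
  have "P \<noteq> 0"
    using assms(1) by auto
  then have "degree P > 0"
    using of_int_poly_root_imp_degree_pos assms(4) by blast
  have "degree (Q - P) < degree P"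
  proof -
    have "coeff (Q - P) i = 0" if "degree P \<le> i" for i
      using that assms(2,3) by (cases "i = degree P") (auto simp: coeff_eq_0)
    then have "degree (Q - P) \<le> degree P - 1"
      by (intro degree_le) simp
    with \<open>degree P > 0\<close> show ?thesis
      by linarith
  qed
  moreover have "degree P \<le> degree (Q - P)"
    using assms(1,4,5) \<open>Q \<noteq> P\<close>
    by (intro prime_poly_degree_le_of_common_root[where z = z]) (simp_all add: of_int_poly_hom.hom_minus)
  ultimately show False
    by simp
qed

lemma card_le_card_of_nonzero_roots:
  fixes F :: "int poly set" and S :: "complex set"
  assumes "finite S" and "prime q" and "d > 0"
    and polys: "\<And>P. P \<in> F \<Longrightarrow> eisenstein_at q P \<and> lead_coeff P = 1 \<and> degree P = d"
    and roots: "\<And>P z. P \<in> F \<Longrightarrow> z \<noteq> 0 \<Longrightarrow> poly (of_int_poly P) z = 0 \<Longrightarrow> z \<in> S"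
  shows "card F \<le> card S"
proof -
  define root where "root P = (SOME z. poly (of_int_poly P) z = (0 :: complex))" for P
  have root: "poly (of_int_poly P) (root P) = 0" if "P \<in> F" for P
  proof -
    have "\<not> constant (poly (of_int_poly P :: complex poly))"
      using polys[OF that] \<open>d > 0\<close> by (simp add: constant_degree)
    from fundamental_theorem_of_algebra[OF this] show ?thesis
      unfolding root_def by (rule someI_ex)
  qed
  have root_nonzero: "root P \<noteq> 0" if "P \<in> F" for P
  proof
    assume "root P = 0"
    then have "coeff P 0 = 0"
      using root[OF that] by (simp add: poly_0_coeff_0)
    with polys[OF that] show False
      by (simp add: eisenstein_at_def)
  qed
  have prime: "prime_elem P" if "P \<in> F" for P
  proof -
    have "content P dvd lead_coeff P"
      by (rule content_dvd_coeff)
    then have "content P = 1"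
      using polys[OF that] is_unit_content_iff by metis
    then show ?thesis
      using polys[OF that] \<open>d > 0\<close>
      by (intro irreducible_imp_prime_poly eisenstein_irreducible[OF \<open>prime q\<close>]) auto
  qed
  have "inj_on root F"
  proof (rule inj_onI)
    fix P Q
    assume "P \<in> F" "Q \<in> F" "root P = root Q"
    then show "P = Q"
      using prime_poly_eq_of_common_root[OF prime, of Q P "root P"] polys root by metis
  qed
  moreover have "root ` F \<subseteq> S"
    using roots root root_nonzero by blast
  ultimately show ?thesis
    using card_inj_on_le \<open>finite S\<close> by blast
qed

(* For z \<noteq> 0, rows 1..n force an eigenvector to start with 1, 1/z, ..., 1/z^n; rows n+1..2n
   then determine its remaining coordinates (digit_tail, via digit_tail_rec), and row 0 becomes
   the polynomial equation of eigenvalue_digit_mat. *)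
definition digit_mat :: "nat \<Rightarrow> int \<Rightarrow> int \<Rightarrow> (nat \<Rightarrow> nat \<Rightarrow> int) \<Rightarrow> int mat" where
  "digit_mat n w s B = mat (2*n+1) (2*n+1) (\<lambda>(r, c).
     if r = 0 then (if c = n + 1 then w else 0)
     else if r \<le> n then (if c + 1 = r then 1 else 0)
     else if c = r + 1 then s
     else if 1 \<le> c \<and> c \<le> n then B (r - n) c else 0)"

lemma dim_digit_mat [simp]:
  "dim_row (digit_mat n w s B) = 2*n+1" "dim_col (digit_mat n w s B) = 2*n+1"
  unfolding digit_mat_def by simp_all

lemma digit_mat_mem_int_mats_height:
  assumes "\<bar>w\<bar> \<le> int h" and "\<bar>s\<bar> \<le> int h" and "h \<ge> 1" and "\<And>i j. \<bar>B i j\<bar> \<le> int h"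
  shows "digit_mat n w s B \<in> int_mats_height (2*n+1) h"
  using assms unfolding int_mats_height_def digit_mat_def by auto

lemma digit_mat_mult_vec:
  fixes v :: "'a :: comm_ring_1 vec"
  assumes "n \<ge> 1" and "dim_vec v = 2*n+1" and "r < 2*n+1"
  shows "(map_mat of_int (digit_mat n w s B) *\<^sub>v v) $ r =
    (if r = 0 then of_int w * v $ (n+1)
     else if r \<le> n then v $ (r - 1)
     else (if r < 2*n then of_int s * v $ (r+1) else 0)
          + (\<Sum>c\<in>{1..n}. of_int (B (r - n) c) * v $ c))"
proof -
  let ?I = "{0..<2*n+1}"
  have row: "(map_mat of_int (digit_mat n w s B) *\<^sub>v v) $ r
      = (\<Sum>c\<in>?I. of_int (digit_mat n w s B $$ (r, c)) * v $ c)"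
    using assms by (simp add: digit_mat_def scalar_prod_def)
  consider "r = 0" | "1 \<le> r" "r \<le> n" | "n < r" by linarith
  then show ?thesis
  proof cases
    case 1
    then have "(\<Sum>c\<in>?I. of_int (digit_mat n w s B $$ (r, c)) * v $ c)
        = (\<Sum>c\<in>?I. if c = n + 1 then of_int w * v $ c else 0)"
      by (intro sum.cong) (auto simp: digit_mat_def)
    with 1 row assms(1) show ?thesis
      by (simp add: sum.delta del: sum.op_ivl_Suc)
  next
    case 2
    then have "(\<Sum>c\<in>?I. of_int (digit_mat n w s B $$ (r, c)) * v $ c)
        = (\<Sum>c\<in>?I. if c = r - 1 then v $ c else 0)"
      using assms(3) by (intro sum.cong) (auto simp: digit_mat_def)
    with 2 row assms(3) show ?thesis
      by (simp add: sum.delta del: sum.op_ivl_Suc)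
  next
    case 3
    then have "(\<Sum>c\<in>?I. of_int (digit_mat n w s B $$ (r, c)) * v $ c)
        = (\<Sum>c\<in>?I. if c = r + 1 then of_int s * v $ c else 0)
          + (\<Sum>c\<in>?I. if c \<in> {1..n} then of_int (B (r - n) c) * v $ c else 0)"
      using assms(3) by (subst sum.distrib[symmetric], intro sum.cong) (auto simp: digit_mat_def)
    also have "(\<Sum>c\<in>?I. if c = r + 1 then of_int s * v $ c else 0)
        = (if r < 2*n then of_int s * v $ (r+1) else 0)"
      by (simp add: sum.delta del: sum.op_ivl_Suc)
    also have "(\<Sum>c\<in>?I. if c \<in> {1..n} then of_int (B (r - n) c) * v $ c else 0)
        = (\<Sum>c\<in>?I \<inter> {1..n}. of_int (B (r - n) c) * v $ c)"
      by (rule sum.inter_restrict[symmetric]) simp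
    also have "?I \<inter> {1..n} = {1..n}"
      by auto
    finally show ?thesis
      using 3 row by simp
  qed
qed

definition digit_tail :: "nat \<Rightarrow> int \<Rightarrow> (nat \<Rightarrow> nat \<Rightarrow> int) \<Rightarrow> 'a :: field \<Rightarrow> nat \<Rightarrow> 'a" where
  "digit_tail n s B z i =
     (\<Sum>i'\<in>{i..n}. \<Sum>j\<in>{1..n}. of_int (B i' j) * of_int s ^ (i' - i) / z ^ (i' - i + 1 + j))"

lemma digit_tail_rec:
  assumes "z \<noteq> 0" and "1 \<le> i" and "i \<le> n"
  shows "z * digit_tail n s B z i
    = (\<Sum>j\<in>{1..n}. of_int (B i j) / z ^ j) + of_int s * digit_tail n s B z (i + 1)"
proof -
  have "digit_tail n s B z i
      = (\<Sum>j\<in>{1..n}. of_int (B i j) / z ^ (1 + j))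
        + (\<Sum>i'\<in>{i+1..n}. \<Sum>j\<in>{1..n}. of_int (B i' j) * of_int s ^ (i' - i) / z ^ (i' - i + 1 + j))"
    using assms(3) unfolding digit_tail_def by (simp add: atLeastAtMostSuc_conv sum.atLeast_Suc_atMost)
  also have "(\<Sum>i'\<in>{i+1..n}. \<Sum>j\<in>{1..n}. of_int (B i' j) * of_int s ^ (i' - i) / z ^ (i' - i + 1 + j))
      = of_int s / z * digit_tail n s B z (i + 1)"
    unfolding digit_tail_def sum_distrib_left
  proof (intro sum.cong refl)
    fix i' j
    assume "i' \<in> {i+1..n}"
    then have "i' - i = Suc (i' - (i + 1))"
      by auto
    with assms(1) show "of_int (B i' j) * of_int s ^ (i' - i) / z ^ (i' - i + 1 + j)
        = of_int s / z * (of_int (B i' j) * of_int s ^ (i' - (i + 1)) / z ^ (i' - (i + 1) + 1 + j))"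
      by (simp add: field_simps)
  qed
  finally show ?thesis
    using assms(1) by (simp add: distrib_left sum_distrib_left)
qed

lemma digit_tail_first:
  assumes "z \<noteq> 0"
  shows "z ^ (2*n) * digit_tail n s B z 1
    = (\<Sum>i\<in>{1..n}. \<Sum>j\<in>{1..n}. of_int (B i j) * of_int s ^ (i - 1) * z ^ (2*n - i - j))"
  unfolding digit_tail_def sum_distrib_left
proof (intro sum.cong refl)
  fix i j
  assume "i \<in> {1..n}" "j \<in> {1..n}"
  then have "z ^ (2*n) = z ^ (2*n - i - j) * z ^ (i - 1 + 1 + j)"
    by (simp flip: power_add)
  with assms show "z ^ (2*n) * (of_int (B i j) * of_int s ^ (i - 1) / z ^ (i - 1 + 1 + j))
      = of_int (B i j) * of_int s ^ (i - 1) * z ^ (2*n - i - j)"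
    by (simp add: field_simps)
qed

definition digit_eigvec :: "nat \<Rightarrow> int \<Rightarrow> (nat \<Rightarrow> nat \<Rightarrow> int) \<Rightarrow> 'a :: field \<Rightarrow> 'a vec" where
  "digit_eigvec n s B z = vec (2*n+1) (\<lambda>c. if c \<le> n then 1 / z ^ c else digit_tail n s B z (c - n))"

lemma digit_mat_mult_digit_eigvec:
  fixes z :: "'a :: field"
  assumes "n \<ge> 1" and "z \<noteq> 0" and top: "of_int w * digit_tail n s B z 1 = z" and r: "r < 2*n+1"
  shows "(map_mat of_int (digit_mat n w s B) *\<^sub>v digit_eigvec n s B z) $ r = z * digit_eigvec n s B z $ r"
proof -
  let ?v = "digit_eigvec n s B z" and ?X = "digit_tail n s B z"
  have v: "dim_vec ?v = 2*n+1" "\<And>c. c < 2*n+1 \<Longrightarrow> ?v $ c = (if c \<le> n then 1 / z ^ c else ?X (c - n))"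
    unfolding digit_eigvec_def by simp_all
  note row = digit_mat_mult_vec[where w = w and s = s and B = B, OF assms(1) v(1) r]
  consider "r = 0" | "1 \<le> r" "r \<le> n" | i where "1 \<le> i" "i \<le> n" "r = n + i"
  proof (cases "r \<le> n")
    case True
    then show thesis
      using that(1,2) by (cases "r = 0") auto
  next
    case False
    then show thesis
      using that(3)[of "r - n"] r by simp
  qed
  then show ?thesis
  proof cases
    case 1
    have "?v $ 0 = 1" "?v $ (n + 1) = ?X 1"
      using v(2)[of 0] v(2)[of "n + 1"] assms(1) by simp_all
    with 1 top row show ?thesis
      by simp
  next
    case 2
    then obtain k where k: "r = Suc k"
      using not0_implies_Suc by fastforce
    with 2 r have "?v $ (r - 1) = 1 / z ^ k" "?v $ r = 1 / z ^ r"
      using v(2) by simp_all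
    with 2 k assms(2) row show ?thesis
      by simp
  next
    case 3
    have "?v $ r = ?X i"
      using v(2)[OF r] 3 by simp
    moreover have "(if r < 2*n then of_int s * ?v $ (r + 1) else 0) = of_int s * ?X (i + 1)"
      using 3 v(2)[of "r + 1"] by (cases "i < n") (simp_all add: digit_tail_def)
    moreover have "(\<Sum>c\<in>{1..n}. of_int (B i c) * ?v $ c) = (\<Sum>c\<in>{1..n}. of_int (B i c) / z ^ c)"
      using v(2) by (intro sum.cong) auto
    ultimately show ?thesis
      using row digit_tail_rec[where s = s and B = B, OF assms(2) 3(1,2)] 3
      by (simp add: algebra_simps)
  qed
qed

lemma eigenvalue_digit_mat:
  fixes z :: "'a :: field"
  assumes "n \<ge> 1" and "z \<noteq> 0"
    and char_eq: "z ^ (2*n+1)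
      = of_int w * (\<Sum>i\<in>{1..n}. \<Sum>j\<in>{1..n}. of_int (B i j) * of_int s ^ (i - 1) * z ^ (2*n - i - j))"
  shows "eigenvalue (map_mat of_int (digit_mat n w s B)) z"
proof -
  let ?M = "map_mat of_int (digit_mat n w s B) :: 'a mat" and ?v = "digit_eigvec n s B z"
  have "z ^ (2*n) * (of_int w * digit_tail n s B z 1) = of_int w * (z ^ (2*n) * digit_tail n s B z 1)"
    by (simp only: mult.left_commute)
  also have "\<dots> = z ^ (2*n+1)"
    by (simp only: digit_tail_first[OF assms(2)] char_eq[symmetric])
  also have "\<dots> = z ^ (2*n) * z"
    by simp
  finally have top: "of_int w * digit_tail n s B z 1 = z"
    using assms(2) by simp
  have "?M *\<^sub>v ?v = z \<cdot>\<^sub>v ?v"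
  proof (rule eq_vecI)
    show "dim_vec (?M *\<^sub>v ?v) = dim_vec (z \<cdot>\<^sub>v ?v)"
      by (simp add: digit_eigvec_def)
    fix r
    assume "r < dim_vec (z \<cdot>\<^sub>v ?v)"
    then have r: "r < 2*n+1"
      by (simp add: digit_eigvec_def)
    show "(?M *\<^sub>v ?v) $ r = (z \<cdot>\<^sub>v ?v) $ r"
      unfolding digit_mat_mult_digit_eigvec[OF assms(1,2) top r] using r
      by (simp add: digit_eigvec_def)
  qed
  moreover have "?v \<noteq> 0\<^sub>v (2*n+1)"
  proof
    assume "?v = 0\<^sub>v (2*n+1)"
    then have "?v $ 0 = 0"
      by simp
    then show False
      by (simp add: digit_eigvec_def)
  qed
  moreover have "?v \<in> carrier_vec (2*n+1)"
    by (simp add: digit_eigvec_def)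
  moreover have "dim_row ?M = 2*n+1"
    by simp
  ultimately show ?thesis
    unfolding eigenvalue_def eigenvector_def by metis
qed

definition digit :: "int \<Rightarrow> nat \<Rightarrow> int \<Rightarrow> int" where
  "digit s p x = x div s ^ p mod s"

lemma sum_digits:
  assumes "s > 0" and "0 \<le> x" and "x < s ^ N"
  shows "(\<Sum>p<N. digit s p x * s ^ p) = x"
  using assms(2,3)
proof (induction N arbitrary: x)
  case 0
  then show ?case by simp
next
  case (Suc N)
  have "x div s * s \<le> x"
    using div_mult_mod_eq[of x s] pos_mod_sign[OF assms(1), of x] by linarith
  also have "x < s ^ N * s"
    using Suc.prems(2) by (simp add: mult.commute)
  finally have "x div s < s ^ N"
    using assms(1) by simp
  then have IH: "(\<Sum>p<N. digit s p (x div s) * s ^ p) = x div s"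
    using Suc.prems assms(1) by (intro Suc.IH) (simp_all add: pos_imp_zdiv_nonneg_iff)
  have "digit s (Suc p) x = digit s p (x div s)" for p
    using assms(1) by (simp add: digit_def zdiv_zmult2_eq mult.commute)
  then have "(\<Sum>p<Suc N. digit s p x * s ^ p) = digit s 0 x + s * (\<Sum>p<N. digit s p (x div s) * s ^ p)"
    by (simp only: sum.lessThan_Suc_shift) (simp add: sum_distrib_left mult_ac)
  also have "\<dots> = x"
    by (simp only: IH) (simp add: digit_def)
  finally show ?case .
qed

lemma digit_eq_0_of_less:
  assumes "s > 0" and "0 \<le> x" and "x < s ^ m" and "m \<le> p"
  shows "digit s p x = 0"
proof -
  have "x < s ^ p"
    using assms power_increasing[of m p s] by simp
  with assms(2) show ?thesis
    by (simp add: digit_def)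
qed

lemma digit_eq_0_of_dvd:
  assumes "s > 0" and "s ^ Suc p dvd x"
  shows "digit s p x = 0"
proof -
  from assms(2) obtain k where "x = s ^ Suc p * k" ..
  then have "x = s ^ p * (s * k)"
    by simp
  with assms(1) show ?thesis
    by (simp add: digit_def)
qed

(* For 2 \<le> K \<le> 2n, the cells (i, j) of {1..n} \<times> {1..n} with i + j = K are those with
   diag_lo n K \<le> i - 1 < diag_hi n K; diag_block n s K holds the nonnegative numbers whose nonzero
   base-s digits all lie at these positions. *)
definition diag_lo :: "nat \<Rightarrow> nat \<Rightarrow> nat" where
  "diag_lo n K = K - 1 - n"

definition diag_hi :: "nat \<Rightarrow> nat \<Rightarrow> nat" where
  "diag_hi n K = min n (K - 1)"

definition diag_block :: "nat \<Rightarrow> int \<Rightarrow> nat \<Rightarrow> int set" where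
  "diag_block n s K = {x. 0 \<le> x \<and> x < s ^ diag_hi n K \<and> s ^ diag_lo n K dvd x}"

lemma digit_diag_block_eq_0:
  assumes "s > 0" and "x \<in> diag_block n s K" and "i \<in> {1..n}" and "K \<notin> {i+1..i+n}"
  shows "digit s (i - 1) x = 0"
proof (cases "K \<le> i")
  case True
  then have "diag_hi n K \<le> i - 1"
    by (simp add: diag_hi_def)
  with assms(1,2) show ?thesis
    by (intro digit_eq_0_of_less) (simp_all add: diag_block_def)
next
  case False
  with assms(3,4) have "Suc (i - 1) \<le> diag_lo n K"
    by (auto simp: diag_lo_def)
  moreover have "s ^ diag_lo n K dvd x"
    using assms(2) by (simp add: diag_block_def)
  ultimately have "s ^ Suc (i - 1) dvd x"
    by (meson dvd_trans le_imp_power_dvd)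
  with assms(1) show ?thesis
    by (rule digit_eq_0_of_dvd)
qed

lemma sum_digits_diag_block:
  assumes "s > 0" and "x \<in> diag_block n s K"
  shows "(\<Sum>i\<in>{1..n}. digit s (i - 1) x * s ^ (i - 1)) = x"
proof -
  have "diag_hi n K \<le> n"
    by (simp add: diag_hi_def)
  then have "x < s ^ n"
    using assms power_increasing[of "diag_hi n K" n s] by (simp add: diag_block_def)
  then have "(\<Sum>p<n. digit s p x * s ^ p) = x"
    using sum_digits[OF assms(1)] assms(2) by (simp add: diag_block_def)
  then show ?thesis
    by (simp add: sum.atLeast1_atMost_eq)
qed

lemma sum_diag_digits:
  fixes z :: "'a :: comm_ring_1"
  assumes "s > 0" and T: "\<And>K. K \<in> {2..2*n} \<Longrightarrow> T K \<in> diag_block n s K"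
  shows "(\<Sum>i\<in>{1..n}. \<Sum>j\<in>{1..n}. of_int (digit s (i - 1) (T (i + j))) * of_int s ^ (i - 1) * z ^ (2*n - i - j))
    = (\<Sum>K\<in>{2..2*n}. of_int (T K) * z ^ (2*n - K))"
proof -
  define g where "g i K = of_int (digit s (i - 1) (T K) * s ^ (i - 1)) * z ^ (2*n - K)" for i K
  have row: "(\<Sum>j\<in>{1..n}. of_int (digit s (i - 1) (T (i + j))) * of_int s ^ (i - 1) * z ^ (2*n - i - j))
      = (\<Sum>K\<in>{2..2*n}. g i K)" if i: "i \<in> {1..n}" for i
  proof -
    have "(\<Sum>j\<in>{1..n}. of_int (digit s (i - 1) (T (i + j))) * of_int s ^ (i - 1) * z ^ (2*n - i - j))
        = (\<Sum>j\<in>{1..n}. g i (j + i))"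
      by (intro sum.cong) (simp_all add: g_def add.commute)
    also have "\<dots> = (\<Sum>K\<in>{1+i..n+i}. g i K)"
      by (rule sum.shift_bounds_cl_nat_ivl[symmetric])
    also have "\<dots> = (\<Sum>K\<in>{2..2*n}. g i K)"
    proof (rule sum.mono_neutral_left)
      show "\<forall>K\<in>{2..2*n} - {1+i..n+i}. g i K = 0"
      proof
        fix K
        assume "K \<in> {2..2*n} - {1+i..n+i}"
        then have "digit s (i - 1) (T K) = 0"
          using T i by (intro digit_diag_block_eq_0[OF assms(1)]) auto
        then show "g i K = 0"
          by (simp add: g_def)
      qed
    qed (use i in auto)
    finally show ?thesis .
  qed
  have column: "(\<Sum>i\<in>{1..n}. g i K) = of_int (T K) * z ^ (2*n - K)" if K: "K \<in> {2..2*n}" for K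
    unfolding g_def
    by (simp only: sum_distrib_right[symmetric] of_int_sum[symmetric] sum_digits_diag_block[OF assms(1) T[OF K]])
  have "(\<Sum>i\<in>{1..n}. \<Sum>j\<in>{1..n}. of_int (digit s (i - 1) (T (i + j))) * of_int s ^ (i - 1) * z ^ (2*n - i - j))
      = (\<Sum>i\<in>{1..n}. \<Sum>K\<in>{2..2*n}. g i K)"
    by (rule sum.cong[OF refl]) (rule row)
  also have "\<dots> = (\<Sum>K\<in>{2..2*n}. \<Sum>i\<in>{1..n}. g i K)"
    by (rule sum.swap)
  also have "\<dots> = (\<Sum>K\<in>{2..2*n}. of_int (T K) * z ^ (2*n - K))"
    by (rule sum.cong[OF refl]) (rule column)
  finally show ?thesis .
qed

lemma sum_diag_width: "(\<Sum>K\<in>{2..2*n}. diag_hi n K - diag_lo n K) = n * n"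
proof -
  let ?cells = "SIGMA K:{2..2*n}. {diag_lo n K..<diag_hi n K}"
  have "bij_betw (\<lambda>(i, j). (i + j, i - 1)) ({1..n} \<times> {1..n}) ?cells"
    by (rule bij_betw_byWitness[where f' = "\<lambda>(K, p). (p + 1, K - p - 1)"])
      (auto simp: diag_hi_def, auto simp: diag_lo_def diag_hi_def)
  then have "card ?cells = n * n"
    by (simp add: bij_betw_same_card[symmetric])
  moreover have "card ?cells = (\<Sum>K\<in>{2..2*n}. diag_hi n K - diag_lo n K)"
    by (simp add: card_SigmaI)
  ultimately show ?thesis
    by simp
qed

lemma diag_width_top: "n \<ge> 1 \<Longrightarrow> diag_hi n (2*n) - diag_lo n (2*n) = 1"
  by (simp add: diag_hi_def diag_lo_def)

lemma diag_width_next: "n \<ge> 2 \<Longrightarrow> K + 1 = 2*n \<Longrightarrow> diag_hi n K - diag_lo n K = 2"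
  by (simp add: diag_hi_def diag_lo_def)

lemma mult_mem_diag_block:
  assumes "0 < s" and "0 \<le> N" and "N < s ^ (diag_hi n K - diag_lo n K)" and "K \<in> {2..2*n}"
  shows "s ^ diag_lo n K * N \<in> diag_block n s K"
proof -
  have "diag_lo n K \<le> diag_hi n K"
    using assms(4) by (auto simp: diag_lo_def diag_hi_def)
  then have "s ^ diag_lo n K * s ^ (diag_hi n K - diag_lo n K) = s ^ diag_hi n K"
    by (simp flip: power_add)
  moreover have "s ^ diag_lo n K * N < s ^ diag_lo n K * s ^ (diag_hi n K - diag_lo n K)"
    using assms(1-3) by (intro mult_strict_left_mono) simp_all
  ultimately show ?thesis
    using assms(1,2) by (simp add: diag_block_def)
qed

lemma pow_le_card_PiE_diag:
  fixes b c :: nat and W :: "nat \<Rightarrow> 'a set"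
  assumes "\<And>K. K \<in> {2..2*n} \<Longrightarrow> b ^ (diag_hi n K - diag_lo n K) \<le> c * card (W K)"
  shows "b ^ (n * n) \<le> c ^ (2*n - 1) * card (PiE {2..2*n} W)"
proof -
  have "b ^ (n * n) = (\<Prod>K\<in>{2..2*n}. b ^ (diag_hi n K - diag_lo n K))"
    by (simp only: power_sum[symmetric] sum_diag_width)
  also have "\<dots> \<le> (\<Prod>K\<in>{2..2*n}. c * card (W K))"
    by (rule prod_mono) (simp add: assms)
  also have "\<dots> = c ^ (2*n - 1) * card (PiE {2..2*n} W)"
    by (simp add: prod.distrib card_PiE)
  finally show ?thesis .
qed

lemma finite_int_mats_height: "finite (int_mats_height d h)"
proof -
  let ?entries = "\<lambda>A :: int mat. restrict (\<lambda>ij. A $$ ij) ({..<d} \<times> {..<d})"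
  have "inj_on ?entries (int_mats_height d h)"
  proof (rule inj_onI)
    fix A B
    assume A: "A \<in> int_mats_height d h" and B: "B \<in> int_mats_height d h"
      and eq: "?entries A = ?entries B"
    show "A = B"
    proof (rule eq_matI)
      fix i j
      assume "i < dim_row B" "j < dim_col B"
      then have "(i, j) \<in> {..<d} \<times> {..<d}"
        using B by (auto simp: int_mats_height_def)
      with fun_cong[OF eq, of "(i, j)"] show "A $$ (i, j) = B $$ (i, j)"
        by simp
    qed (use A B in \<open>auto simp: int_mats_height_def\<close>)
  qed
  moreover have "?entries ` int_mats_height d h \<subseteq> PiE ({..<d} \<times> {..<d}) (\<lambda>_. {- int h..int h})"
  proof (rule image_subsetI)
    fix A
    assume "A \<in> int_mats_height d h"
    then show "?entries A \<in> PiE ({..<d} \<times> {..<d}) (\<lambda>_. {- int h..int h})"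
      unfolding restrict_PiE_iff by (force simp: int_mats_height_def abs_le_iff)
  qed
  then have "finite (?entries ` int_mats_height d h)"
    by (rule finite_subset) (simp add: finite_PiE)
  ultimately show ?thesis
    by (rule finite_imageD[rotated])
qed

lemma finite_spec: "finite (spec d h)"
proof -
  let ?roots = "\<lambda>A :: int mat. {z. poly (char_poly (map_mat of_int A :: complex mat)) z = 0}"
  have carrier: "map_mat of_int A \<in> (carrier_mat d d :: complex mat set)"
    if "A \<in> int_mats_height d h" for A
    using that by (simp add: int_mats_height_def)
  have "spec d h \<subseteq> (\<Union>A\<in>int_mats_height d h. ?roots A)"
    unfolding spec_def using eigenvalue_root_char_poly[OF carrier] by blast
  moreover have "finite (?roots A)" if "A \<in> int_mats_height d h" for A
  proof (rule poly_roots_finite)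
    show "char_poly (map_mat of_int A :: complex mat) \<noteq> 0"
      using degree_monic_char_poly[OF carrier[OF that]] by fastforce
  qed
  ultimately show ?thesis
    using finite_int_mats_height by (meson finite_UN_I finite_subset)
qed

lemma zero_mem_spec:
  assumes "d \<ge> 1"
  shows "0 \<in> spec d h"
proof -
  have "map_mat of_int (0\<^sub>m d d) = (0\<^sub>m d d :: complex mat)"
    by (rule eq_matI) simp_all
  moreover have "eigenvector (0\<^sub>m d d :: complex mat) (unit_vec d 0) 0"
    using assms by (auto simp: eigenvector_def)
  ultimately have "eigenvalue (map_mat of_int (0\<^sub>m d d)) (0 :: complex)"
    unfolding eigenvalue_def by auto
  moreover have "0\<^sub>m d d \<in> int_mats_height d h"
    by (simp add: int_mats_height_def)
  ultimately show ?thesis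
    unfolding spec_def by blast
qed

(* The index K of c is that of the antidiagonal i + j = K: for L = 2n+1, c K is minus the
   coefficient of x^(2n-K). *)
definition monic_poly :: "nat \<Rightarrow> (nat \<Rightarrow> int) \<Rightarrow> int poly" where
  "monic_poly L c = monom 1 L - (\<Sum>K\<in>{2..L-1}. monom (c K) (L - 1 - K))"

lemma coeff_monic_poly:
  "coeff (monic_poly L c) t = (if t = L then 1 else if t + 3 \<le> L then - c (L - 1 - t) else 0)"
proof -
  have "(\<Sum>K\<in>{2..L-1}. coeff (monom (c K) (L - 1 - K)) t)
      = (\<Sum>K\<in>{2..L-1}. if K = L - 1 - t \<and> t + 3 \<le> L then c K else 0)"
    by (rule sum.cong) (auto simp: coeff_monom)
  also have "\<dots> = (if t + 3 \<le> L then c (L - 1 - t) else 0)"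
    by (cases "t + 3 \<le> L") (auto simp: sum.delta)
  finally show ?thesis
    unfolding monic_poly_def coeff_diff coeff_sum by (auto simp: coeff_monom)
qed

lemma degree_monic_poly [simp]: "degree (monic_poly L c) = L"
proof (rule order.antisym)
  show "degree (monic_poly L c) \<le> L"
    by (rule degree_le) (auto simp: coeff_monic_poly)
  show "L \<le> degree (monic_poly L c)"
    by (rule le_degree) (simp add: coeff_monic_poly)
qed

lemma coeff_monic_poly_self [simp]: "coeff (monic_poly L c) L = 1"
  by (simp add: coeff_monic_poly)

lemma poly_monic_poly:
  fixes z :: "'a :: comm_ring_1"
  shows "poly (of_int_poly (monic_poly L c)) z = z ^ L - (\<Sum>K\<in>{2..L-1}. of_int (c K) * z ^ (L - 1 - K))"
  unfolding monic_poly_def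
  by (simp add: of_int_poly_hom.hom_minus of_int_poly_hom.hom_sum of_int_hom.map_poly_hom_monom
      poly_sum poly_monom)

lemma poly_monic_poly_Suc:
  fixes z :: "'a :: comm_ring_1"
  assumes "c L = 0"
  shows "poly (of_int_poly (monic_poly (Suc L) c)) z = z * poly (of_int_poly (monic_poly L c)) z"
proof -
  have "poly (of_int_poly (monic_poly (Suc L) c)) z
      = z ^ Suc L - (\<Sum>K\<in>{2..L}. of_int (c K) * z ^ (L - K))"
    by (simp add: poly_monic_poly)
  also have "(\<Sum>K\<in>{2..L}. of_int (c K) * z ^ (L - K)) = (\<Sum>K\<in>{2..L-1}. of_int (c K) * z ^ (L - K))"
  proof (rule sum.mono_neutral_right)
    show "\<forall>K\<in>{2..L} - {2..L-1}. of_int (c K) * z ^ (L - K) = 0"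
    proof
      fix K
      assume "K \<in> {2..L} - {2..L-1}"
      then have "K = L"
        by auto
      with assms show "of_int (c K) * z ^ (L - K) = 0"
        by simp
    qed
  qed auto
  also have "\<dots> = z * (\<Sum>K\<in>{2..L-1}. of_int (c K) * z ^ (L - 1 - K))"
    unfolding sum_distrib_left
  proof (rule sum.cong[OF refl])
    fix K
    assume "K \<in> {2..L-1}"
    then have "L - K = Suc (L - 1 - K)"
      by auto
    then show "of_int (c K) * z ^ (L - K) = z * (of_int (c K) * z ^ (L - 1 - K))"
      by (simp add: mult.left_commute)
  qed
  finally show ?thesis
    by (simp only: poly_monic_poly right_diff_distrib power_Suc)
qed

lemma eisenstein_at_monic_poly:
  assumes "prime q" and "L \<ge> 3" and "\<forall>K\<in>{2..L-1}. q dvd c K" and "\<not> q\<^sup>2 dvd c (L - 1)"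
  shows "eisenstein_at q (monic_poly L c)"
  unfolding eisenstein_at_def
proof (intro conjI allI impI)
  show "\<not> q dvd lead_coeff (monic_poly L c)"
    using assms(1) not_prime_unit by (auto simp: coeff_monic_poly)
  show "\<not> q\<^sup>2 dvd coeff (monic_poly L c) 0"
    using assms(2,4) by (simp add: coeff_monic_poly)
  fix i
  assume "i < degree (monic_poly L c)"
  then show "q dvd coeff (monic_poly L c) i"
  proof (cases "i + 3 \<le> L")
    case True
    then have "L - 1 - i \<in> {2..L-1}"
      by auto
    with assms(3) True show ?thesis
      by (simp add: coeff_monic_poly)
  qed (simp add: coeff_monic_poly)
qed

lemma monic_poly_eqD:
  assumes "monic_poly L c = monic_poly L c'" and "K \<in> {2..L-1}"
  shows "c K = c' K"
proof -
  have t: "L - 1 - K \<noteq> L" "L - 1 - K + 3 \<le> L" "L - 1 - (L - 1 - K) = K"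
    using assms(2) by auto
  have "coeff (monic_poly L d) (L - 1 - K) = - d K" for d
    by (simp only: coeff_monic_poly t if_False if_True)
  then show ?thesis
    using assms(1) by (metis neg_equal_iff_equal)
qed

(* The case L = 2n, where T (2n) = 0, covers a vanishing constant term: the polynomial of degree
   2n+1 realised by digit_mat is then x * monic_poly (2n) (w * T), and only the second factor needs
   to be Eisenstein. *)
lemma monic_poly_root_mem_spec:
  fixes z :: complex
  assumes "n \<ge> 1" and "0 < s" and "s \<le> int h" and "\<bar>w\<bar> \<le> int h"
    and T: "\<And>K. K \<in> {2..2*n} \<Longrightarrow> T K \<in> diag_block n s K"
    and L: "L = 2*n+1 \<or> (L = 2*n \<and> T (2*n) = 0)"
    and "z \<noteq> 0" and root: "poly (of_int_poly (monic_poly L (\<lambda>K. w * T K))) z = 0"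
  shows "z \<in> spec (2*n+1) h"
proof -
  define B where "B i j = digit s (i - 1) (T (i + j))" for i j
  have "poly (of_int_poly (monic_poly (2*n+1) (\<lambda>K. w * T K))) z = 0"
    using L
  proof
    assume "L = 2*n \<and> T (2*n) = 0"
    with root show ?thesis
      using poly_monic_poly_Suc[of "\<lambda>K. w * T K" "2*n" z] by simp
  qed (use root in simp)
  then have "z ^ (2*n+1) = of_int w * (\<Sum>K\<in>{2..2*n}. of_int (T K) * z ^ (2*n - K))"
    by (simp add: poly_monic_poly sum_distrib_left mult.assoc)
  also have "\<dots> = of_int w * (\<Sum>i\<in>{1..n}. \<Sum>j\<in>{1..n}. of_int (B i j) * of_int s ^ (i - 1) * z ^ (2*n - i - j))"
    unfolding B_def by (simp only: sum_diag_digits[OF \<open>0 < s\<close> T])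
  finally have "eigenvalue (map_mat of_int (digit_mat n w s B)) z"
    by (rule eigenvalue_digit_mat[OF \<open>n \<ge> 1\<close> \<open>z \<noteq> 0\<close>])
  moreover have "digit_mat n w s B \<in> int_mats_height (2*n+1) h"
  proof (rule digit_mat_mem_int_mats_height)
    fix i j
    have "0 \<le> B i j" "B i j < s"
      using \<open>0 < s\<close> by (simp_all add: B_def digit_def)
    with assms(3) show "\<bar>B i j\<bar> \<le> int h"
      by simp
  qed (use assms(2-4) in auto)
  ultimately show ?thesis
    unfolding spec_def by blast
qed

lemma inj_on_monic_poly:
  assumes "w \<noteq> 0" and V: "V \<subseteq> PiE {2..2*n} X" and L: "L = 2*n+1 \<or> L = 2*n"
    and top: "\<And>T. T \<in> V \<Longrightarrow> L = 2*n \<Longrightarrow> T (2*n) = 0"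
  shows "inj_on (\<lambda>T. monic_poly L (\<lambda>K. w * T K)) V"
proof (rule inj_onI)
  fix T T'
  assume "T \<in> V" "T' \<in> V" and eq: "monic_poly L (\<lambda>K. w * T K) = monic_poly L (\<lambda>K. w * T' K)"
  have agree: "T K = T' K" if "K \<in> {2..2*n}" for K
  proof (cases "K \<in> {2..L-1}")
    case True
    with \<open>w \<noteq> 0\<close> show ?thesis
      using monic_poly_eqD[OF eq True] by simp
  next
    case False
    with L that have "L = 2*n" "K = 2*n"
      by auto
    with top[OF \<open>T \<in> V\<close>] top[OF \<open>T' \<in> V\<close>] show ?thesis
      by simp
  qed
  from V \<open>T \<in> V\<close> \<open>T' \<in> V\<close> have "T \<in> PiE {2..2*n} X" "T' \<in> PiE {2..2*n} X"
    by auto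
  then show "T = T'"
    using agree by (rule PiE_ext)
qed

lemma card_le_card_spec:
  fixes V :: "(nat \<Rightarrow> int) set"
  assumes "n \<ge> 1" and "prime q" and "0 < s" and "s \<le> int h" and "w \<noteq> 0" and "\<bar>w\<bar> \<le> int h"
    and L: "L = 2*n+1 \<or> L = 2*n" and "L \<ge> 3"
    and V: "V \<subseteq> PiE {2..2*n} (diag_block n s)"
    and dvd: "\<And>T K. T \<in> V \<Longrightarrow> K \<in> {2..L-1} \<Longrightarrow> q dvd w * T K"
    and not_dvd: "\<And>T. T \<in> V \<Longrightarrow> \<not> q\<^sup>2 dvd w * T (L - 1)"
    and top: "\<And>T. T \<in> V \<Longrightarrow> L = 2*n \<Longrightarrow> T (2*n) = 0"
  shows "card V \<le> card (spec (2*n+1) h)"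
proof -
  let ?P = "\<lambda>T. monic_poly L (\<lambda>K. w * T K)"
  have "inj_on ?P V"
    using \<open>w \<noteq> 0\<close> V L top by (rule inj_on_monic_poly)
  then have "card V = card (?P ` V)"
    by (simp add: card_image)
  also have "\<dots> \<le> card (spec (2*n+1) h)"
  proof (rule card_le_card_of_nonzero_roots[OF finite_spec \<open>prime q\<close>])
    show "0 < L"
      using \<open>L \<ge> 3\<close> by simp
    fix P
    assume "P \<in> ?P ` V"
    then obtain T where "T \<in> V" and P: "P = ?P T"
      by blast
    show "eisenstein_at q P \<and> lead_coeff P = 1 \<and> degree P = L"
      unfolding P using \<open>prime q\<close> \<open>L \<ge> 3\<close> dvd[OF \<open>T \<in> V\<close>] not_dvd[OF \<open>T \<in> V\<close>]
      by (simp add: eisenstein_at_monic_poly)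
    fix z :: complex
    assume "z \<noteq> 0" and "poly (of_int_poly P) z = 0"
    moreover have "T K \<in> diag_block n s K" if "K \<in> {2..2*n}" for K
      using V \<open>T \<in> V\<close> that by blast
    moreover have "L = 2*n+1 \<or> (L = 2*n \<and> T (2*n) = 0)"
      using L top[OF \<open>T \<in> V\<close>] by blast
    ultimately show "z \<in> spec (2*n+1) h"
      using monic_poly_root_mem_spec assms(1,3,4,6) P by blast
  qed
  finally show ?thesis .
qed

lemma le_two_mult_card_not_dvd:
  fixes p m :: nat
  assumes "p \<ge> 2"
  shows "m \<le> 2 * card {N \<in> {1..m}. \<not> p dvd N}"
proof -
  let ?M = "{N \<in> {1..m}. p dvd N}" and ?U = "{N \<in> {1..m}. \<not> p dvd N}"
  have "card ?M \<le> card ?U"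
  proof (rule card_inj_on_le)
    show "inj_on (\<lambda>N. N - 1) ?M"
      by (rule inj_onI) auto
    show "(\<lambda>N. N - 1) ` ?M \<subseteq> ?U"
    proof (rule image_subsetI)
      fix N
      assume N: "N \<in> ?M"
      then have "p \<le> N"
        by (auto intro: dvd_imp_le)
      moreover have "\<not> p dvd N - 1"
      proof
        assume "p dvd N - 1"
        from N have "p dvd N"
          by simp
        then have "p dvd N - (N - 1)"
          using \<open>p dvd N - 1\<close> by (rule dvd_diff_nat)
        with \<open>p \<le> N\<close> assms show False
          by simp
      qed
      ultimately show "N - 1 \<in> ?U"
        using N assms by auto
    qed
  qed simp
  moreover have "card ?M + card ?U = card (?M \<union> ?U)"
    by (rule card_Un_disjoint[symmetric]) auto
  moreover have "?M \<union> ?U = {1..m}"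
    by auto
  ultimately show ?thesis
    by simp
qed

(* Used with w = p a prime factor of h - 1, so that p \<le> h and p does not divide h; excluding
   multiples of p in the top coefficient keeps p^2 out of the constant term p * T (2n). *)
definition large_height_family :: "nat \<Rightarrow> nat \<Rightarrow> nat \<Rightarrow> (nat \<Rightarrow> int) set" where
  "large_height_family n h p = PiE {2..2*n} (\<lambda>K. (\<lambda>N. int h ^ diag_lo n K * int N) `
     (if K = 2*n then {N \<in> {1..h-1}. \<not> p dvd N} else {..<h ^ (diag_hi n K - diag_lo n K)}))"

lemma large_height_family_subset:
  assumes "h \<ge> 1" and "n \<ge> 1"
  shows "large_height_family n h p \<subseteq> PiE {2..2*n} (diag_block n (int h))"
  unfolding large_height_family_def
proof (rule PiE_mono)
  fix K
  assume K: "K \<in> {2..2*n}"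
  show "(\<lambda>N. int h ^ diag_lo n K * int N) `
      (if K = 2*n then {N \<in> {1..h-1}. \<not> p dvd N} else {..<h ^ (diag_hi n K - diag_lo n K)})
    \<subseteq> diag_block n (int h) K"
  proof (rule image_subsetI)
    fix N
    assume "N \<in> (if K = 2*n then {N \<in> {1..h-1}. \<not> p dvd N} else {..<h ^ (diag_hi n K - diag_lo n K)})"
    then have "N < h ^ (diag_hi n K - diag_lo n K)"
      using diag_width_top[OF assms(2)] assms(1) by (auto split: if_splits)
    then have "int N < int h ^ (diag_hi n K - diag_lo n K)"
      by (simp flip: of_nat_power)
    with K assms(1) show "int h ^ diag_lo n K * int N \<in> diag_block n (int h) K"
      by (intro mult_mem_diag_block) simp_all
  qed
qed

lemma card_large_height_family_le_card_spec:
  assumes "h \<ge> 3" and "n \<ge> 1" and "prime p" and "p dvd h - 1"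
  shows "card (large_height_family n h p) \<le> card (spec (2*n+1) h)"
proof (rule card_le_card_spec[where q = "int p" and s = "int h" and w = "int p" and L = "2*n+1"])
  have "\<not> p dvd h"
  proof
    assume "p dvd h"
    then have "p dvd h - (h - 1)"
      using \<open>p dvd h - 1\<close> by (rule dvd_diff_nat)
    with assms(1) \<open>prime p\<close> show False
      by simp
  qed
  show "\<not> (int p)\<^sup>2 dvd int p * T (2*n+1 - 1)" if T: "T \<in> large_height_family n h p" for T
  proof
    assume "(int p)\<^sup>2 dvd int p * T (2*n+1 - 1)"
    moreover have "T (2*n) \<in> (\<lambda>N. int h ^ diag_lo n (2*n) * int N) ` {N \<in> {1..h-1}. \<not> p dvd N}"
      using PiE_mem[OF T[unfolded large_height_family_def], of "2*n"] assms(2) by simp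
    then obtain N where "\<not> p dvd N" "T (2*n) = int h ^ (n - 1) * int N"
      by (auto simp: diag_lo_def)
    ultimately have "int p dvd int h ^ (n - 1) * int N"
      using \<open>prime p\<close> by (simp add: power2_eq_square)
    then have "p dvd h ^ (n - 1) * N"
      by (simp flip: of_nat_power of_nat_mult)
    then consider "p dvd h ^ (n - 1)" | "p dvd N"
      using \<open>prime p\<close> prime_dvd_mult_iff by blast
    then show False
    proof cases
      case 1
      with \<open>prime p\<close> \<open>\<not> p dvd h\<close> show False
        using prime_dvd_power by blast
    qed (use \<open>\<not> p dvd N\<close> in simp)
  qed
  have "p \<le> h - 1"
    by (rule dvd_imp_le) (use assms in simp_all)
  then show "\<bar>int p\<bar> \<le> int h"
    by simp
  show "large_height_family n h p \<subseteq> PiE {2..2*n} (diag_block n (int h))"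
    using assms(1,2) by (intro large_height_family_subset) simp_all
qed (use assms prime_gt_0_nat in simp_all)

lemma pow_le_card_large_height_family:
  assumes "h \<ge> 3" and "n \<ge> 1" and "prime p"
  shows "h ^ (n * n) \<le> 4 ^ (2*n - 1) * card (large_height_family n h p)"
  unfolding large_height_family_def
proof (rule pow_le_card_PiE_diag)
  fix K
  let ?Top = "{N \<in> {1..h-1}. \<not> p dvd N}"
  have "card ((\<lambda>N. int h ^ diag_lo n K * int N) ` A) = card A" for A
    using assms(1) by (intro card_image) (simp add: inj_on_def)
  moreover have "h \<le> 4 * card ?Top"
  proof -
    have "1 \<in> ?Top"
      using assms(1) prime_gt_1_nat[OF assms(3)] by simp
    then have "?Top \<noteq> {}"
      by blast
    then have "card ?Top \<ge> 1"
      using card_gt_0_iff[of ?Top] by simp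
    moreover have "h - 1 \<le> 2 * card ?Top"
      using \<open>prime p\<close> by (intro le_two_mult_card_not_dvd) (simp add: prime_ge_2_nat)
    ultimately show ?thesis
      by linarith
  qed
  ultimately show "h ^ (diag_hi n K - diag_lo n K) \<le> 4 * card ((\<lambda>N. int h ^ diag_lo n K * int N) `
      (if K = 2*n then ?Top else {..<h ^ (diag_hi n K - diag_lo n K)}))"
    using diag_width_top[OF assms(2)] by simp
qed

lemma card_spec_ge_of_height_ge_3:
  assumes "h \<ge> 3" and "n \<ge> 1"
  shows "h ^ (n * n) \<le> 4 ^ (2*n - 1) * card (spec (2*n+1) h)"
proof -
  have "h - 1 \<noteq> 1"
    using assms(1) by simp
  then obtain p where "prime p" and "p dvd h - 1"
    using prime_factor_nat by blast
  then show ?thesis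
    using pow_le_card_large_height_family[OF assms \<open>prime p\<close>]
      card_large_height_family_le_card_spec[OF assms \<open>prime p\<close> \<open>p dvd h - 1\<close>]
    by (meson le_trans mult_le_mono2)
qed

(* For h = 2 no prime w \<le> 2 can play the role of p above, so w = 1 and the coefficients carry
   the Eisenstein condition at 3 themselves: T (2n) = 0 and T (2n-1) = 3 * 2^(n-2). *)
definition height_two_family :: "nat \<Rightarrow> (nat \<Rightarrow> int) set" where
  "height_two_family n = PiE {2..2*n} (\<lambda>K. (\<lambda>N. 2 ^ diag_lo n K * N) `
     (if K = 2*n then {0} else if K + 1 = 2*n then {3}
      else (\<lambda>N. 3 * int N) ` {..(2 ^ (diag_hi n K - diag_lo n K) - 1) div 3}))"

lemma height_two_family_subset:
  assumes "n \<ge> 2"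
  shows "height_two_family n \<subseteq> PiE {2..2*n} (diag_block n 2)"
  unfolding height_two_family_def
proof (rule PiE_mono, rule image_subsetI)
  fix K N
  assume K: "K \<in> {2..2*n}" and N: "N \<in> (if K = 2*n then {0} else if K + 1 = 2*n then {3}
      else (\<lambda>N. 3 * int N) ` {..(2 ^ (diag_hi n K - diag_lo n K) - 1) div 3})"
  have "0 \<le> N \<and> N < 2 ^ (diag_hi n K - diag_lo n K)"
  proof (cases "K = 2*n \<or> K + 1 = 2*n")
    case True
    with N assms show ?thesis
      by (auto simp: diag_width_next)
  next
    case False
    with N obtain M :: nat where M: "M \<le> (2 ^ (diag_hi n K - diag_lo n K) - 1) div 3" "N = 3 * int M"
      by auto
    then have "3 * M < (2::nat) ^ (diag_hi n K - diag_lo n K)"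
      using one_le_power[of "2::nat" "diag_hi n K - diag_lo n K"] by presburger
    then have "int (3 * M) < int (2 ^ (diag_hi n K - diag_lo n K))"
      by (simp only: of_nat_less_iff)
    with M(2) show ?thesis
      by simp
  qed
  with K show "2 ^ diag_lo n K * N \<in> diag_block n 2 K"
    by (intro mult_mem_diag_block) simp_all
qed

lemma card_height_two_family_le_card_spec:
  assumes "n \<ge> 2"
  shows "card (height_two_family n) \<le> card (spec (2*n+1) 2)"
proof (rule card_le_card_spec[where q = 3 and s = 2 and w = 1 and L = "2*n"])
  have coeff: "T K \<in> (\<lambda>N. 2 ^ diag_lo n K * N) `
      (if K = 2*n then {0} else if K + 1 = 2*n then {3}
       else (\<lambda>N. 3 * int N) ` {..(2 ^ (diag_hi n K - diag_lo n K) - 1) div 3})"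
    if "T \<in> height_two_family n" "K \<in> {2..2*n}" for T K
    using that unfolding height_two_family_def by blast
  show "(3::int) dvd 1 * T K" if "T \<in> height_two_family n" "K \<in> {2..2*n - 1}" for T K
  proof -
    from that have "K \<in> {2..2*n}" "K \<noteq> 2*n"
      by auto
    with coeff[OF that(1) \<open>K \<in> {2..2*n}\<close>] show ?thesis
      by (auto split: if_splits)
  qed
  show "\<not> (3::int)\<^sup>2 dvd 1 * T (2*n - 1)" if "T \<in> height_two_family n" for T
  proof
    define m where "m = 2*n - 1"
    assume "(3::int)\<^sup>2 dvd 1 * T (2*n - 1)"
    moreover have "m \<in> {2..2*n}" "m \<noteq> 2*n" "m + 1 = 2*n"
      using assms by (auto simp: m_def)
    then have "T m = 2 ^ diag_lo n m * 3"
      using coeff[OF that, of m] by simp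
    ultimately have "(3::int) dvd 2 ^ diag_lo n m"
      using dvd_times_right_cancel_iff[of "3::int" 3 "2 ^ diag_lo n m"] by (simp add: m_def power2_eq_square)
    then have "(3::int) dvd 2"
      by (rule prime_dvd_power[rotated]) simp
    then show False
      by simp
  qed
  show "T (2*n) = 0" if "T \<in> height_two_family n" for T
    using coeff[OF that, of "2*n"] assms by simp
  show "height_two_family n \<subseteq> PiE {2..2*n} (diag_block n 2)"
    using assms by (rule height_two_family_subset)
qed (use assms in simp_all)

lemma pow_le_card_height_two_family:
  assumes "n \<ge> 2"
  shows "2 ^ (n * n) \<le> 4 ^ (2*n - 1) * card (height_two_family n)"
  unfolding height_two_family_def
proof (rule pow_le_card_PiE_diag)
  fix K
  let ?w = "diag_hi n K - diag_lo n K"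
  let ?A = "if K = 2*n then {0} else if K + 1 = 2*n then {3}
    else (\<lambda>N. 3 * int N) ` {..(2 ^ ?w - 1) div 3}"
  have "card ((\<lambda>N. 2 ^ diag_lo n K * N) ` ?A) = card ?A"
    by (intro card_image) (simp add: inj_on_def)
  moreover have "2 ^ ?w \<le> 4 * card ?A"
  proof (cases "K = 2*n \<or> K + 1 = 2*n")
    case True
    with assms show ?thesis
      by (auto simp: diag_width_top diag_width_next)
  next
    case False
    then have "card ?A = (2 ^ ?w - 1) div 3 + 1"
      by (simp add: card_image inj_on_def)
    moreover have "(2::nat) ^ ?w \<le> 3 * ((2 ^ ?w - 1) div 3 + 1)"
      using one_le_power[of "2::nat" ?w] by presburger
    ultimately show ?thesis
      by linarith
  qed
  ultimately show "2 ^ ?w \<le> 4 * card ((\<lambda>N. 2 ^ diag_lo n K * N) ` ?A)"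
    by simp
qed

lemma card_spec_ge_of_height_2:
  assumes "n \<ge> 2"
  shows "2 ^ (n * n) \<le> 4 ^ (2*n - 1) * card (spec (2*n+1) 2)"
  using pow_le_card_height_two_family[OF assms] card_height_two_family_le_card_spec[OF assms]
  by (meson le_trans mult_le_mono2)

lemma card_spec_pos:
  assumes "d \<ge> 1"
  shows "card (spec d h) \<ge> 1"
  using zero_mem_spec[OF assms] finite_spec[of d h] by (auto simp: Suc_le_eq card_gt_0_iff)

lemma card_spec_lower_bound:
  assumes "n \<ge> 1" and "h \<ge> 1"
  shows "h ^ (n * n) \<le> 4 ^ (2*n - 1) * card (spec (2*n+1) h)"
proof (cases "h \<ge> 3")
  case True
  then show ?thesis
    using assms(1) by (rule card_spec_ge_of_height_ge_3)
next
  case False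
  show ?thesis
  proof (cases "n \<ge> 2 \<and> h = 2")
    case True
    then show ?thesis
      using card_spec_ge_of_height_2[of n] by simp
  next
    case False
    with \<open>\<not> h \<ge> 3\<close> assms have "h = 1 \<or> (h = 2 \<and> n = 1)"
      by auto
    then have "h ^ (n * n) \<le> 4 ^ (2*n - 1)"
      using assms(1) by (auto simp: one_le_power)
    also have "\<dots> \<le> 4 ^ (2*n - 1) * card (spec (2*n+1) h)"
      using card_spec_pos[of "2*n+1" h] by simp
    finally show ?thesis .
  qed
qed

lemma mult_16_pow_le: "n * 16 ^ n \<le> 2 * (25::nat) ^ n"
proof (induction n)
  case (Suc n)
  have "Suc n * 16 ^ Suc n = 16 * (n * 16 ^ n) + 16 * 16 ^ n"
    by simp
  also have "\<dots> \<le> 16 * (2 * 25 ^ n) + 16 * 25 ^ n"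
    using Suc.IH by (intro add_mono) (simp_all add: power_mono)
  also have "\<dots> \<le> 2 * 25 ^ Suc n"
    by simp
  finally show ?case .
qed simp

lemma two_mult_pow_4_le_pow_25:
  assumes "n \<ge> 1"
  shows "2 * n * 4 ^ (2*n - 1) \<le> (25::nat) ^ n"
proof -
  have "4 * (2 * n * 4 ^ (2*n - 1)) = 2 * n * (4 * 4 ^ (2*n - 1))"
    by (simp only: mult_ac)
  also have "4 * 4 ^ (2*n - 1) = (16::nat) ^ n"
    using assms by (simp add: power_mult flip: power_Suc)
  finally show ?thesis
    using mult_16_pow_le[of n] by linarith
qed

theorem mainTheorem3:
  fixes n h :: nat
  assumes "h > 0"
    and "\<exists>k. n = 2 ^ k"
  shows "real (card (spec (2 * n + 1) h)) \<ge> (2 * real n / 5 ^ (2 * n)) * real h ^ (n ^ 2)"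
proof (cases "n = 0")
  case False
  let ?C = "card (spec (2 * n + 1) h)"
  have "2 * n * h ^ (n * n) \<le> 2 * n * (4 ^ (2*n - 1) * ?C)"
    using False assms(1) card_spec_lower_bound[of n h] by simp
  also have "\<dots> = (2 * n * 4 ^ (2*n - 1)) * ?C"
    by (simp only: mult.assoc)
  also have "\<dots> \<le> 25 ^ n * ?C"
    using False by (intro mult_le_mono1 two_mult_pow_4_le_pow_25) simp
  finally have "real (2 * n * h ^ (n * n)) \<le> real (25 ^ n * ?C)"
    by (simp only: of_nat_le_iff)
  then have "2 * real n * real h ^ (n * n) \<le> real ?C * 25 ^ n"
    by (simp add: mult.commute)
  have "(2 * real n / 5 ^ (2 * n)) * real h ^ (n ^ 2) = 2 * real n * real h ^ (n * n) / 25 ^ n"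
    by (simp add: power_mult power2_eq_square)
  also have "\<dots> \<le> real ?C"
    using \<open>2 * real n * real h ^ (n * n) \<le> real ?C * 25 ^ n\<close> by (simp add: pos_divide_le_eq)
  finally show ?thesis .
qed simp

end
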